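(* Let $\mathfrak{S}=(\mathcal{X},\mathsf{S},\gamma,(\Lambda_{a})_{a\in\mathcal{A}})$ be a spectral decomposition system for the Euclidean space $\mathfrak{H}$. Let $m\geq 1$ be an integer, let $(X_i)_{1\leq i\leq m}$ be a family in $\mathfrak{H}$, and let $(\alpha_i)_{1\leq i\leq m}$ be a family in $[0,+\infty)$. Then \[ \gamma\Big(\sum_{i=1}^m\alpha_iX_i\Big)\in\operatorname{conv}\Big(\mathsf{S}\cdot\sum_{i=1}^m\alpha_i\gamma(X_i)\Big). \]
   Context: A Euclidean space is a finite-dimensional real inner product space; inner products are written $\langle\cdot,\cdot\rangle$ and norms $\|\cdot\|$. Let $\mathfrak{H}$ and $\mathcal{X}$ be Euclidean spaces, let $\mathsf{S}$ be a group acting on $\mathcal{X}$ by linear isometries (for every $s\in\mathsf{S}$, the map $x\mapsto s\cdot x$ is a linear isometry of $\mathcal{X}$), let $\gamma\colon\mathfrak{H}\to\mathcal{X}$, and let $(\Lambda_a)_{a\in\mathcal{A}}$ be a family of linear operators from $\mathcal{X}$ to $\mathfrak{H}$. The orbit of $x\in\mathcal{X}$ is $\mathsf{S}\cdot x=\{s\cdot x: s\in\mathsf{S}\}$; a map $\tau$ on $\mathcal{X}$ is $\mathsf{S}$-invariant if $\tau(s\cdot x)=\tau(x)$ for all $s,x$. The tuple $(\mathcal{X},\mathsf{S},\gamma,(\Lambda_a)_{a\in\mathcal{A}})$ is a spectral decomposition system for $\mathfrak{H}$ if: [A] every $\Lambda_a$ is an isometry; [B] there exists an $\mathsf{S}$-invariant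 map $\tau\colon\mathcal{X}\to\mathcal{X}$ with $\tau(x)\in\mathsf{S}\cdot x$ for all $x\in\mathcal{X}$ and $\gamma\circ\Lambda_a=\tau$ for all $a\in\mathcal{A}$; [C] for every $X\in\mathfrak{H}$ there is $a\in\mathcal{A}$ with $X=\Lambda_a\gamma(X)$; [D] $\langle X,Y\rangle\leq\langle\gamma(X),\gamma(Y)\rangle$ for all $X,Y\in\mathfrak{H}$. $\operatorname{conv}$ denotes convex hull. *)

theory Defs
  imports "HOL-Analysis.Analysis" "HOL-Algebra.Group_Action"
begin

definition isometric_linear_action ::
  "('g, 'm) monoid_scheme \<Rightarrow> ('g \<Rightarrow> 'x::euclidean_space \<Rightarrow> 'x) \<Rightarrow> bool" where
  "isometric_linear_action G act \<longleftrightarrow>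
     group G \<and> group_action G UNIV act \<and>
     (\<forall>s\<in>carrier G. linear (act s) \<and> (\<forall>x. norm (act s x) = norm x))"

definition spectral_decomposition_system ::
  "('g, 'm) monoid_scheme \<Rightarrow> ('g \<Rightarrow> 'x::euclidean_space \<Rightarrow> 'x) \<Rightarrow>
   ('h::euclidean_space \<Rightarrow> 'x) \<Rightarrow> ('a \<Rightarrow> 'x \<Rightarrow> 'h) \<Rightarrow> bool" where
  "spectral_decomposition_system G act \<gamma> \<Lambda> \<longleftrightarrow>
     isometric_linear_action G act \<and>
     \<comment> \<open>[A] every Lambda_a is a (linear) isometry\<close>
     (\<forall>a. linear (\<Lambda> a) \<and> (\<forall>x. norm (\<Lambda> a x) = norm x)) \<and>
     \<comment> \<open>[B]\<close>
     (\<exists>\<tau>::'x \<Rightarrow> 'x.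
        (\<forall>s\<in>carrier G. \<forall>x. \<tau> (act s x) = \<tau> x) \<and>
        (\<forall>x. \<tau> x \<in> orbit G act x) \<and>
        (\<forall>a. \<gamma> \<circ> \<Lambda> a = \<tau>)) \<and>
     \<comment> \<open>[C]\<close>
     (\<forall>X. \<exists>a. X = \<Lambda> a (\<gamma> X)) \<and>
     \<comment> \<open>[D]\<close>
     (\<forall>X Y. inner X Y \<le> inner (\<gamma> X) (\<gamma> Y))"

end

theory Submission
  imports Defs
begin

text \<open>
  Write \<open>\<tau> = \<gamma> \<circ> \<Lambda> a\<close> for the orbit invariant of [B]; applying [D] to \<open>\<Lambda> a u\<close> and
  \<open>\<Lambda> a w\<close> gives \<open>\<langle>u, w\<rangle> \<le> \<langle>\<tau> u, \<tau> w\<rangle>\<close>.  For \<open>Y = \<Sum>\<alpha>\<^sub>i X\<^sub>i\<close>, the decomposition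
  \<open>Y = \<Lambda> a (\<gamma> Y)\<close> of [C] and [D] applied termwise give
  \<open>\<langle>u, \<gamma> Y\<rangle> \<le> \<langle>\<tau> u, \<Sum>\<alpha>\<^sub>i \<gamma> X\<^sub>i\<rangle>\<close>; as \<open>\<tau> u = s \<cdot> u\<close> for some \<open>s\<close> and the action is
  orthogonal, the right-hand side is \<open>\<langle>u, s\<inverse> \<cdot> \<Sum>\<alpha>\<^sub>i \<gamma> X\<^sub>i\<rangle>\<close>.  So no linear functional
  separates \<open>\<gamma> Y\<close> from the orbit of \<open>\<Sum>\<alpha>\<^sub>i \<gamma> X\<^sub>i\<close>, and it remains to see that orbits
  are compact.  They are bounded, and closed: for \<open>v\<close> in the closure of the orbit of \<open>x\<close>,
  the functional \<open>\<langle>\<tau> v, \<cdot>\<rangle>\<close> is maximised over that closure at \<open>\<tau> x\<close>, which has the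
  same norm as \<open>\<tau> v\<close>, so \<open>\<tau> v = \<tau> x\<close>.
\<close>

lemma eq_if_norm_eq_inner_le:
  fixes a b :: "'a::real_inner"
  assumes "norm a = norm b" and "inner a a \<le> inner a b"
  shows "a = b"
proof -
  have "inner a a = inner b b"
    using assms(1) by (metis power2_norm_eq_inner)
  then have "inner (a - b) (a - b) \<le> 0"
    using assms(2) by (simp add: inner_diff inner_commute)
  then show ?thesis
    by (metis inner_gt_zero_iff not_le right_minus_eq)
qed

lemma mem_convex_hull_if_support_le:
  fixes S :: "'a::euclidean_space set"
  assumes "compact S" and support: "\<And>u. \<exists>p\<in>S. inner u y \<le> inner u p"
  shows "y \<in> convex hull S"
proof (rule ccontr)
  assume y: "y \<notin> convex hull S"
  have "closed (convex hull S)"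
    using \<open>compact S\<close> by (simp add: compact_convex_hull compact_imp_closed)
  from separating_hyperplane_closed_point[OF convex_convex_hull this y]
  obtain c b where "inner c y < b" and sep: "\<forall>x\<in>convex hull S. b < inner c x"
    by (elim exE conjE)
  moreover obtain p where "p \<in> S" and "inner (- c) y \<le> inner (- c) p"
    using support[of "- c"] by (elim bexE)
  moreover have "b < inner c p"
    using sep hull_inc[OF \<open>p \<in> S\<close>] by simp
  ultimately show False by simp
qed

locale spectral_system =
  fixes G :: "('g, 'm) monoid_scheme"
    and act :: "'g \<Rightarrow> 'x::euclidean_space \<Rightarrow> 'x"
    and \<gamma> :: "'h::euclidean_space \<Rightarrow> 'x"
    and \<Lambda> :: "'a \<Rightarrow> 'x \<Rightarrow> 'h"
  assumes spectral: "spectral_decomposition_system G act \<gamma> \<Lambda>"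
begin

text \<open>By [B], \<open>\<gamma> \<circ> \<Lambda> a\<close> does not depend on \<open>a\<close>, so any index will do.\<close>
definition \<tau> :: "'x \<Rightarrow> 'x" where
  "\<tau> = \<gamma> \<circ> \<Lambda> undefined"

lemma group: "group G"
  using spectral by (simp add: spectral_decomposition_system_def isometric_linear_action_def)

lemma group_action: "group_action G UNIV act"
  using spectral by (simp add: spectral_decomposition_system_def isometric_linear_action_def)

lemma orthogonal_transformation_act:
  "s \<in> carrier G \<Longrightarrow> orthogonal_transformation (act s)"
  using spectral
  by (simp add: spectral_decomposition_system_def isometric_linear_action_def
      orthogonal_transformation)

lemma orthogonal_transformation_\<Lambda>: "orthogonal_transformation (\<Lambda> a)"
  using spectral by (simp add: spectral_decomposition_system_def orthogonal_transformation)

lemma \<gamma>_\<Lambda>: "\<gamma> (\<Lambda> a x) = \<tau> x"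
  using spectral unfolding spectral_decomposition_system_def \<tau>_def by (metis comp_apply)

lemma \<tau>_act: "s \<in> carrier G \<Longrightarrow> \<tau> (act s x) = \<tau> x"
  using spectral unfolding spectral_decomposition_system_def \<tau>_def by metis

lemma \<tau>_mem_orbit: "\<tau> x \<in> orbit G act x"
  using spectral unfolding spectral_decomposition_system_def \<tau>_def by metis

lemma \<Lambda>_\<gamma>_decomposition: "\<exists>a. Y = \<Lambda> a (\<gamma> Y)"
  using spectral by (simp add: spectral_decomposition_system_def)

lemma inner_le_inner_\<gamma>: "inner Y Z \<le> inner (\<gamma> Y) (\<gamma> Z)"
  using spectral by (simp add: spectral_decomposition_system_def)

lemma mem_orbitE:
  assumes "p \<in> orbit G act x"
  obtains s where "s \<in> carrier G" and "p = act s x"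
  using assms unfolding orbit_def by blast

lemma act_mem_orbit:
  assumes "s \<in> carrier G" and "p \<in> orbit G act x"
  shows "act s p \<in> orbit G act x"
proof -
  have "act s p \<in> orbit G act p"
    using assms(1) by (auto simp: orbit_def)
  then show ?thesis
    using group_action.orbit_trans[OF group_action UNIV_I UNIV_I UNIV_I assms(2)] by blast
qed

lemma inner_act_act: "s \<in> carrier G \<Longrightarrow> inner (act s p) (act s q) = inner p q"
  using orthogonal_transformation_act orthogonal_transformation_def by blast

lemma inner_\<Lambda>_\<Lambda>: "inner (\<Lambda> a p) (\<Lambda> a q) = inner p q"
  using orthogonal_transformation_\<Lambda> orthogonal_transformation_def by blast

lemma norm_mem_orbit: "p \<in> orbit G act x \<Longrightarrow> norm p = norm x"
  by (metis mem_orbitE orthogonal_transformation_act orthogonal_transformation_norm)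

lemma \<tau>_idem: "\<tau> (\<tau> x) = \<tau> x"
  by (metis \<tau>_mem_orbit \<tau>_act mem_orbitE)

lemma \<tau>_\<gamma>: "\<tau> (\<gamma> Y) = \<gamma> Y"
  by (metis \<Lambda>_\<gamma>_decomposition \<gamma>_\<Lambda>)

lemma inner_le_inner_\<tau>: "inner u w \<le> inner (\<tau> u) (\<tau> w)"
  using inner_le_inner_\<gamma>[of "\<Lambda> undefined u" "\<Lambda> undefined w"]
  by (simp add: \<gamma>_\<Lambda> inner_\<Lambda>_\<Lambda>)

lemma mem_orbit_if_\<tau>_eq:
  assumes "\<tau> v = \<tau> x"
  shows "v \<in> orbit G act x"
proof -
  have "v \<in> orbit G act (\<tau> v)"
    using group_action.orbit_sym[OF group_action] \<tau>_mem_orbit by blast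
  then show ?thesis
    using group_action.orbit_trans[OF group_action] \<tau>_mem_orbit assms by (metis UNIV_I)
qed

lemma inner_mem_orbit_le_\<tau>:
  assumes "p \<in> orbit G act x" and "\<tau> w = w"
  shows "inner w p \<le> inner w (\<tau> x)"
  using inner_le_inner_\<tau>[of p w] assms by (metis mem_orbitE \<tau>_act inner_commute)

lemma closed_orbit: "closed (orbit G act x)"
proof -
  let ?O = "orbit G act x"
  have "v \<in> ?O" if v: "v \<in> closure ?O" for v
  proof -
    obtain s where s: "s \<in> carrier G" "\<tau> v = act s v"
      using \<tau>_mem_orbit mem_orbitE by metis
    have "act s ` closure ?O \<subseteq> closure ?O"
    proof (rule image_closure_subset)
      show "continuous_on (closure ?O) (act s)"
        using orthogonal_transformation_act[OF s(1)]
        by (metis orthogonal_transformation_linear linear_conv_bounded_linear linear_continuous_on)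
      show "act s ` ?O \<subseteq> closure ?O"
        using act_mem_orbit[OF s(1)] closure_subset by blast
    qed simp
    then have \<tau>v: "\<tau> v \<in> closure ?O"
      using v s by auto
    have "?O \<subseteq> sphere 0 (norm x)"
      using norm_mem_orbit by auto
    then have "closure ?O \<subseteq> sphere 0 (norm x)"
      by (rule closure_minimal) (rule closed_sphere)
    then have "norm (\<tau> v) = norm (\<tau> x)"
      using \<tau>v norm_mem_orbit[OF \<tau>_mem_orbit] by auto
    moreover have "?O \<subseteq> {p. inner (\<tau> v) p \<le> inner (\<tau> v) (\<tau> x)}"
      using inner_mem_orbit_le_\<tau> \<tau>_idem by blast
    then have "closure ?O \<subseteq> {p. inner (\<tau> v) p \<le> inner (\<tau> v) (\<tau> x)}"
      by (rule closure_minimal) (rule closed_halfspace_le)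
    then have "inner (\<tau> v) (\<tau> v) \<le> inner (\<tau> v) (\<tau> x)"
      using \<tau>v by blast
    ultimately show "v \<in> ?O"
      using eq_if_norm_eq_inner_le mem_orbit_if_\<tau>_eq by blast
  qed
  then show ?thesis
    using closure_subset_eq by blast
qed

lemma compact_orbit: "compact (orbit G act x)"
proof -
  have "bounded (orbit G act x)"
    unfolding bounded_iff using norm_mem_orbit by auto
  then show ?thesis
    using closed_orbit compact_eq_bounded_closed by blast
qed

lemma inner_\<gamma>_sum_le:
  assumes nonneg: "\<And>i. i \<in> I \<Longrightarrow> \<alpha> i \<ge> 0" and "\<tau> w = w"
  shows "inner w (\<gamma> (\<Sum>i\<in>I. \<alpha> i *\<^sub>R X i)) \<le> inner w (\<Sum>i\<in>I. \<alpha> i *\<^sub>R \<gamma> (X i))"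
proof -
  define Y where "Y = (\<Sum>i\<in>I. \<alpha> i *\<^sub>R X i)"
  obtain a where a: "Y = \<Lambda> a (\<gamma> Y)"
    using \<Lambda>_\<gamma>_decomposition by blast
  have "inner w (\<gamma> Y) = inner (\<Lambda> a w) Y"
    using inner_\<Lambda>_\<Lambda>[of a w "\<gamma> Y"] a by simp
  also have "\<dots> = (\<Sum>i\<in>I. \<alpha> i * inner (\<Lambda> a w) (X i))"
    unfolding Y_def by (simp add: inner_sum_right)
  also have "\<dots> \<le> (\<Sum>i\<in>I. \<alpha> i * inner w (\<gamma> (X i)))"
  proof (rule sum_mono)
    fix i assume "i \<in> I"
    have "inner (\<Lambda> a w) (X i) \<le> inner w (\<gamma> (X i))"
      using inner_le_inner_\<gamma>[of "\<Lambda> a w" "X i"] \<open>\<tau> w = w\<close> by (simp add: \<gamma>_\<Lambda>)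
    then show "\<alpha> i * inner (\<Lambda> a w) (X i) \<le> \<alpha> i * inner w (\<gamma> (X i))"
      using nonneg[OF \<open>i \<in> I\<close>] by (rule mult_left_mono)
  qed
  also have "\<dots> = inner w (\<Sum>i\<in>I. \<alpha> i *\<^sub>R \<gamma> (X i))"
    by (simp add: inner_sum_right)
  finally show ?thesis
    unfolding Y_def .
qed

lemma support_orbit_sum_ge:
  assumes "\<And>i. i \<in> I \<Longrightarrow> \<alpha> i \<ge> 0"
  shows "\<exists>p\<in>orbit G act (\<Sum>i\<in>I. \<alpha> i *\<^sub>R \<gamma> (X i)).
           inner u (\<gamma> (\<Sum>i\<in>I. \<alpha> i *\<^sub>R X i)) \<le> inner u p"
proof -
  let ?y = "\<gamma> (\<Sum>i\<in>I. \<alpha> i *\<^sub>R X i)" and ?z = "\<Sum>i\<in>I. \<alpha> i *\<^sub>R \<gamma> (X i)"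
  obtain s where s: "s \<in> carrier G" and \<tau>u: "\<tau> u = act s u"
    using \<tau>_mem_orbit mem_orbitE by metis
  have s_inv: "inv\<^bsub>G\<^esub> s \<in> carrier G" and "act (inv\<^bsub>G\<^esub> s) (\<tau> u) = u"
    using group.inv_closed[OF group s] group_action.orbit_sym_aux[OF group_action s] \<tau>u
    by auto
  have "inner u ?y \<le> inner (\<tau> u) ?z"
    using inner_le_inner_\<tau>[of u ?y] inner_\<gamma>_sum_le[of I \<alpha> "\<tau> u" X, OF assms \<tau>_idem]
    by (simp add: \<tau>_\<gamma>)
  also have "\<dots> = inner u (act (inv\<^bsub>G\<^esub> s) ?z)"
    using inner_act_act[OF s_inv, of "\<tau> u" ?z] \<open>act (inv\<^bsub>G\<^esub> s) (\<tau> u) = u\<close> by simp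
  finally show ?thesis
    using s_inv unfolding orbit_def by blast
qed

end

theorem theorem3p9:
  fixes G :: "('g, 'm) monoid_scheme"
    and act :: "'g \<Rightarrow> 'x::euclidean_space \<Rightarrow> 'x"
    and \<gamma> :: "'h::euclidean_space \<Rightarrow> 'x"
    and \<Lambda> :: "'a \<Rightarrow> 'x \<Rightarrow> 'h"
    and m :: nat
    and X :: "nat \<Rightarrow> 'h"
    and \<alpha> :: "nat \<Rightarrow> real"
  assumes "spectral_decomposition_system G act \<gamma> \<Lambda>"
    and "m \<ge> 1"
    and "\<forall>i\<in>{1..m}. \<alpha> i \<ge> 0"
  shows "\<gamma> (\<Sum>i=1..m. \<alpha> i *\<^sub>R X i)
           \<in> convex hull (orbit G act (\<Sum>i=1..m. \<alpha> i *\<^sub>R \<gamma> (X i)))"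
proof -
  interpret spectral_system G act \<gamma> \<Lambda>
    using assms(1) by unfold_locales
  show ?thesis
  proof (rule mem_convex_hull_if_support_le[OF compact_orbit])
    fix u
    show "\<exists>p\<in>orbit G act (\<Sum>i=1..m. \<alpha> i *\<^sub>R \<gamma> (X i)).
            inner u (\<gamma> (\<Sum>i=1..m. \<alpha> i *\<^sub>R X i)) \<le> inner u p"
      using assms(3) by (intro support_orbit_sum_ge) simp
  qed
qed

end
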